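(* Let $A\in\mathbb{R}^{m\times n}$ with $m\ge n$ and with nonzero rows $a_1^\top,\dots,a_m^\top$, let $x\in\mathbb{R}^n$ and $b:=Ax$. Fix $\beta\in[0,1)$, $M\in[0,1]$ and $l\in\{1,\dots,n\}$; let $\sigma_l$ be the $l$-th largest singular value of $A$ and $v_l$ an associated right singular vector. Given $x_0\in\mathbb{R}^n$ and $y_0=0$, define for $k\ge0$ $$x_{k+1}=x_k+\frac{b_{i_k}-\langle x_k,a_{i_k}\rangle}{\|a_{i_k}\|_2^2}a_{i_k}+My_k,\qquad y_{k+1}=\beta y_k+(1-\beta)(x_{k+1}-x_k),$$ with $i_0,i_1,\dots$ independent and $\mathbb{P}(i_k=i)=\|a_i\|_2^2/\|A\|_F^2$. Let $r:=1-\sigma_l^2/\|A\|_F^2+M(1-\beta)$, $\zeta:=M(1-\beta)^2$, and $$\lambda_1:=\frac{r+\beta+\sqrt{(r-\beta)^2-4\zeta}}{2}.$$ Suppose $\lambda_1$ is complex with nonzero imaginary part, i.e. $\lambda_1=\rho e^{i\theta}$ with $\rho>0$ and $0<\theta<\pi$. Then there exist constants $C$ and $\theta_0$, depending on $r,\zeta,\beta,v_l,x,x_0$, such that for all $k\ge0$, $$\mathbb{E}\langle x_{k+1}-x,v_l\rangle=C\rho^k\cos(k\theta+\theta_0).$$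
   Context: $\|\cdot\|_2$ is the Euclidean norm, $\|A\|_F$ the Frobenius norm, $b_i$ the $i$-th entry of $b$; expectation is over the random indices. When $(r-\beta)^2-4\zeta<0$ the square root is $i\sqrt{4\zeta-(r-\beta)^2}$. *)

theory Defs
  imports "HOL-Analysis.Analysis"
begin

text \<open>The l-th largest singular value is then sv (l-1).\<close>
definition singular_value_list :: "real^'n^'m \<Rightarrow> (nat \<Rightarrow> real) \<Rightarrow> bool" where
  "singular_value_list A sv \<longleftrightarrow>
     (\<forall>i j. i \<le> j \<longrightarrow> j < CARD('n) \<longrightarrow> sv j \<le> sv i) \<and>
     (\<forall>j < CARD('n). 0 \<le> sv j) \<and>
     (\<exists>w :: nat \<Rightarrow> real^'n.
        (\<forall>i < CARD('n). \<forall>j < CARD('n). w i \<bullet> w j = (if i = j then 1 else 0)) \<and>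
        (\<forall>j < CARD('n). (transpose A ** A) *v w j = (sv j)\<^sup>2 *\<^sub>R w j))"

text \<open>Randomized Kaczmarz with momentum, driven by an index sequence s (s k = i_k).
  Returns (x_k, y_k); x_k, y_k only depend on s 0, ..., s (k-1).\<close>
fun rk_mom :: "real^'n^'m \<Rightarrow> real^'m \<Rightarrow> real \<Rightarrow> real \<Rightarrow> real^'n \<Rightarrow> (nat \<Rightarrow> 'm)
                \<Rightarrow> nat \<Rightarrow> (real^'n) \<times> (real^'n)" where
  "rk_mom A b M \<beta> x0 s 0 = (x0, 0)"
| "rk_mom A b M \<beta> x0 s (Suc k) =
     (let xk = fst (rk_mom A b M \<beta> x0 s k); yk = snd (rk_mom A b M \<beta> x0 s k);
          a = A $ (s k);
          x' = xk + ((b $ (s k) - xk \<bullet> a) / (norm a)\<^sup>2) *\<^sub>R a + M *\<^sub>R yk;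
          y' = \<beta> *\<^sub>R yk + (1 - \<beta>) *\<^sub>R (x' - xk)
      in (x', y'))"

definition frob_sq :: "real^'n^'m \<Rightarrow> real" where
  "frob_sq A = (\<Sum>i\<in>UNIV. (norm (A $ i))\<^sup>2)"

text \<open>Expectation of a function f of the first k indices s 0, ..., s (k-1), where these are
  i.i.d. with P(i = j) = |a_j|^2 / |A|_F^2.\<close>
definition rk_expect :: "real^'n^'m \<Rightarrow> nat \<Rightarrow> ((nat \<Rightarrow> 'm) \<Rightarrow> real) \<Rightarrow> real" where
  "rk_expect A k f =
     (\<Sum>s \<in> PiE {..<k} (\<lambda>_. UNIV). (\<Prod>j<k. (norm (A $ (s j)))\<^sup>2 / frob_sq A) * f s)"

end

theory Submission
  imports Defs
begin

text \<open>Conditioning on the first k indices, the last step of the iteration replaces x by its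
  weighted average over all rows; for a right singular vector v of A this average contracts the
  component along v by q = 1 - sigma_l^2/|A|_F^2. Hence e_k = E<x_k - x, v> and the momentum
  component f_k = E<y_k, v> obey a linear recursion, which eliminates to the scalar recurrence
  e_{k+2} = (r + beta) e_{k+1} - (q beta + M (1 - beta)) e_k. Its characteristic polynomial has
  the root lambda_1, and because lambda_1 is not real, every real solution is the real part of
  c lambda_1^k, i.e. |c| rho^k cos(k theta + Arg c).\<close>

lemma rk_mom_cong_prefix:
  "(\<forall>j<k. s j = s' j) \<Longrightarrow> rk_mom A b M \<beta> x0 s k = rk_mom A b M \<beta> x0 s' k"
  by (induction k) (auto simp: Let_def)

lemma sum_PiE_lessThan_Suc:
  fixes F :: "(nat \<Rightarrow> 'a::finite) \<Rightarrow> real"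
  shows "(\<Sum>s\<in>PiE {..<Suc k} (\<lambda>_. UNIV). F s)
       = (\<Sum>s\<in>PiE {..<k} (\<lambda>_. UNIV). \<Sum>i\<in>UNIV. F (s(k:=i)))"
proof -
  have P: "PiE {..<Suc k} (\<lambda>_. UNIV::'a set)
         = (\<lambda>(y,g). g(k:=y)) ` (UNIV \<times> PiE {..<k} (\<lambda>_. UNIV))"
    by (simp add: lessThan_Suc PiE_insert_eq)
  have inj: "inj_on (\<lambda>(y,g). g(k:=y)) ((UNIV::'a set) \<times> PiE {..<k} (\<lambda>_. UNIV))"
    using inj_combinator[of k "{..<k}" "\<lambda>_. UNIV::'a set"] by simp
  have "(\<Sum>s\<in>PiE {..<Suc k} (\<lambda>_. UNIV). F s)
      = (\<Sum>p\<in>(UNIV::'a set) \<times> PiE {..<k} (\<lambda>_. UNIV). F ((snd p)(k := fst p)))"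
    unfolding P by (subst sum.reindex[OF inj]) (simp add: case_prod_beta)
  also have "\<dots> = (\<Sum>i\<in>UNIV. \<Sum>s\<in>PiE {..<k} (\<lambda>_. UNIV). F (s(k:=i)))"
    by (simp add: sum.cartesian_product case_prod_beta)
  also have "\<dots> = (\<Sum>s\<in>PiE {..<k} (\<lambda>_. UNIV). \<Sum>i\<in>UNIV. F (s(k:=i)))"
    by (rule sum.swap)
  finally show ?thesis .
qed

lemma rk_expect_Suc:
  fixes A :: "real^'n^'m"
  assumes "\<And>i s s'. (\<forall>j<k. s j = s' j) \<Longrightarrow> G i s = G i s'"
  shows "rk_expect A (Suc k) (\<lambda>s. G (s k) s)
       = rk_expect A k (\<lambda>s. \<Sum>i\<in>UNIV. (norm (A$i))\<^sup>2 / frob_sq A * G i s)"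
proof -
  have "(\<Prod>j<Suc k. (norm (A $ ((s(k:=i)) j)))\<^sup>2 / frob_sq A) * G ((s(k:=i)) k) (s(k:=i))
     = (\<Prod>j<k. (norm (A $ (s j)))\<^sup>2 / frob_sq A) * ((norm (A$i))\<^sup>2 / frob_sq A * G i s)" for s i
  proof -
    have "G i (s(k:=i)) = G i s" by (rule assms) simp
    moreover have "(\<Prod>j<k. (norm (A $ ((s(k:=i)) j)))\<^sup>2 / frob_sq A)
                 = (\<Prod>j<k. (norm (A $ (s j)))\<^sup>2 / frob_sq A)"
      by (rule prod.cong) auto
    ultimately show ?thesis by (simp add: prod.lessThan_Suc)
  qed
  then show ?thesis
    unfolding rk_expect_def sum_PiE_lessThan_Suc
    by (intro sum.cong refl) (simp only: sum_distrib_left)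
qed

lemma frob_sq_pos:
  fixes A :: "real^'n^'m"
  assumes "A $ i \<noteq> 0"
  shows "0 < frob_sq A"
proof -
  have "0 < (norm (A $ i))\<^sup>2" using assms by simp
  also have "\<dots> \<le> frob_sq A" unfolding frob_sq_def by (rule member_le_sum) auto
  finally show ?thesis .
qed

lemma sum_row_weights:
  fixes A :: "real^'n^'m"
  assumes "frob_sq A \<noteq> 0"
  shows "(\<Sum>i\<in>UNIV. (norm (A$i))\<^sup>2 / frob_sq A) = 1"
  using assms by (simp add: frob_sq_def sum_divide_distrib[symmetric])

lemma rk_expect_Suc_prefix:
  fixes A :: "real^'n^'m"
  assumes "frob_sq A \<noteq> 0" and "\<And>s s'. (\<forall>j<k. s j = s' j) \<Longrightarrow> g s = g s'"
  shows "rk_expect A (Suc k) g = rk_expect A k g"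
proof -
  have "rk_expect A (Suc k) (\<lambda>s. (\<lambda>i. g) (s k) s)
      = rk_expect A k (\<lambda>s. \<Sum>i\<in>UNIV. (norm (A$i))\<^sup>2 / frob_sq A * g s)"
    using assms(2) by (rule rk_expect_Suc)
  also have "(\<lambda>s. \<Sum>i\<in>UNIV. (norm (A$i))\<^sup>2 / frob_sq A * g s) = g"
    by (simp only: sum_distrib_right[symmetric] sum_row_weights[OF assms(1)] mult_1)
  finally show ?thesis by simp
qed

lemma rk_expect_linear:
  "rk_expect A k (\<lambda>s. a * f s + c * g s) = a * rk_expect A k f + c * rk_expect A k g"
  by (simp add: rk_expect_def sum.distrib sum_distrib_left algebra_simps)

lemma rk_expect_diff:
  "rk_expect A k (\<lambda>s. f s - g s) = rk_expect A k f - rk_expect A k g"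
  by (simp add: rk_expect_def sum_subtractf algebra_simps)

lemma sum_inner_rows:
  fixes A :: "real^'n^'m"
  shows "(\<Sum>i\<in>UNIV. (z \<bullet> A$i) * (A$i \<bullet> v)) = z \<bullet> ((transpose A ** A) *v v)"
proof -
  have "(transpose A ** A) *v v = transpose A *v (A *v v)"
    by (simp add: matrix_vector_mul_assoc)
  then show ?thesis
    by (simp add: matrix_vector_mul_component inner_vec_def transpose_def matrix_vector_mult_def
        sum_distrib_left sum_distrib_right mult_ac) (rule sum.swap)
qed

lemma sum_weighted_projection_eigenvector:
  fixes A :: "real^'n^'m"
  assumes "\<forall>i. A $ i \<noteq> 0" and "(transpose A ** A) *v v = \<sigma>2 *\<^sub>R v"
  shows "(\<Sum>i\<in>UNIV. (norm (A$i))\<^sup>2 / frob_sq A * (z \<bullet> v - (z \<bullet> A$i) * (A$i \<bullet> v) / (norm (A$i))\<^sup>2))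
       = (1 - \<sigma>2 / frob_sq A) * (z \<bullet> v)"
proof -
  have F: "frob_sq A \<noteq> 0" using frob_sq_pos assms(1) by (metis less_irrefl)
  have "(norm (A$i))\<^sup>2 / frob_sq A * (z \<bullet> v - (z \<bullet> A$i) * (A$i \<bullet> v) / (norm (A$i))\<^sup>2)
      = (norm (A$i))\<^sup>2 / frob_sq A * (z \<bullet> v) - (z \<bullet> A$i) * (A$i \<bullet> v) / frob_sq A" for i
  proof -
    have "norm (A$i) \<noteq> 0" using assms(1) by simp
    with F show ?thesis by (simp add: field_simps)
  qed
  then have "(\<Sum>i\<in>UNIV. (norm (A$i))\<^sup>2 / frob_sq A * (z \<bullet> v - (z \<bullet> A$i) * (A$i \<bullet> v) / (norm (A$i))\<^sup>2))
      = (\<Sum>i\<in>UNIV. (norm (A$i))\<^sup>2 / frob_sq A) * (z \<bullet> v)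
        - (\<Sum>i\<in>UNIV. (z \<bullet> A$i) * (A$i \<bullet> v)) / frob_sq A"
    by (simp add: sum_subtractf sum_distrib_right sum_divide_distrib)
  also have "\<dots> = (1 - \<sigma>2 / frob_sq A) * (z \<bullet> v)"
    by (simp add: sum_row_weights[OF F] sum_inner_rows assms(2) algebra_simps)
  finally show ?thesis .
qed

definition rk_mean_error :: "real^'n^'m \<Rightarrow> real \<Rightarrow> real \<Rightarrow> real^'n \<Rightarrow> real^'n \<Rightarrow> real^'n \<Rightarrow> nat \<Rightarrow> real"
  where "rk_mean_error A M \<beta> x0 x v k =
    rk_expect A k (\<lambda>s. (fst (rk_mom A (A *v x) M \<beta> x0 s k) - x) \<bullet> v)"

definition rk_mean_momentum :: "real^'n^'m \<Rightarrow> real \<Rightarrow> real \<Rightarrow> real^'n \<Rightarrow> real^'n \<Rightarrow> real^'n \<Rightarrow> nat \<Rightarrow> real"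
  where "rk_mean_momentum A M \<beta> x0 x v k =
    rk_expect A k (\<lambda>s. snd (rk_mom A (A *v x) M \<beta> x0 s k) \<bullet> v)"

lemma rk_mean_error_Suc:
  fixes A :: "real^'n^'m"
  assumes "\<forall>i. A $ i \<noteq> 0" and "(transpose A ** A) *v v = \<sigma>2 *\<^sub>R v"
  shows "rk_mean_error A M \<beta> x0 x v (Suc k)
       = (1 - \<sigma>2 / frob_sq A) * rk_mean_error A M \<beta> x0 x v k + M * rk_mean_momentum A M \<beta> x0 x v k"
proof -
  define X where "X s = fst (rk_mom A (A *v x) M \<beta> x0 s k)" for s
  define Y where "Y s = snd (rk_mom A (A *v x) M \<beta> x0 s k)" for s
  define G where "G i s = (X s - x) \<bullet> v - ((X s - x) \<bullet> A$i) * (A$i \<bullet> v) / (norm (A$i))\<^sup>2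
    + M * (Y s \<bullet> v)" for i s
  have F: "frob_sq A \<noteq> 0" using frob_sq_pos assms(1) by (metis less_irrefl)
  have step: "(fst (rk_mom A (A *v x) M \<beta> x0 s (Suc k)) - x) \<bullet> v = G (s k) s" for s
  proof -
    have "(A *v x) $ (s k) - X s \<bullet> A $ (s k) = - ((X s - x) \<bullet> A $ (s k))"
      by (simp add: matrix_vector_mul_component inner_diff_left inner_diff_right inner_commute)
    then show ?thesis
      by (simp add: G_def X_def Y_def Let_def inner_add_left inner_diff_left algebra_simps
          add_divide_distrib[symmetric])
  qed
  have "rk_mean_error A M \<beta> x0 x v (Suc k) = rk_expect A (Suc k) (\<lambda>s. G (s k) s)"
    unfolding rk_mean_error_def step ..
  also have "\<dots> = rk_expect A k (\<lambda>s. \<Sum>i\<in>UNIV. (norm (A$i))\<^sup>2 / frob_sq A * G i s)"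
  proof (rule rk_expect_Suc)
    fix i and s s' :: "nat \<Rightarrow> 'm"
    assume "\<forall>j<k. s j = s' j"
    then have "rk_mom A (A *v x) M \<beta> x0 s k = rk_mom A (A *v x) M \<beta> x0 s' k"
      by (rule rk_mom_cong_prefix)
    then show "G i s = G i s'" by (simp add: G_def X_def Y_def)
  qed
  also have "\<dots> = rk_expect A k (\<lambda>s. (1 - \<sigma>2 / frob_sq A) * ((X s - x) \<bullet> v) + M * (Y s \<bullet> v))"
    unfolding G_def distrib_left sum.distrib sum_distrib_right[symmetric]
      sum_weighted_projection_eigenvector[OF assms] sum_row_weights[OF F] mult_1 ..
  also have "\<dots> = (1 - \<sigma>2 / frob_sq A) * rk_mean_error A M \<beta> x0 x v k + M * rk_mean_momentum A M \<beta> x0 x v k"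
    unfolding rk_expect_linear rk_mean_error_def rk_mean_momentum_def X_def Y_def ..
  finally show ?thesis .
qed

lemma rk_mean_momentum_Suc:
  fixes A :: "real^'n^'m"
  assumes "frob_sq A \<noteq> 0"
  shows "rk_mean_momentum A M \<beta> x0 x v (Suc k) = \<beta> * rk_mean_momentum A M \<beta> x0 x v k
       + (1 - \<beta>) * (rk_mean_error A M \<beta> x0 x v (Suc k) - rk_mean_error A M \<beta> x0 x v k)"
proof -
  define X where "X s j = fst (rk_mom A (A *v x) M \<beta> x0 s j)" for s j
  define Y where "Y s j = snd (rk_mom A (A *v x) M \<beta> x0 s j)" for s j
  have "rk_mean_momentum A M \<beta> x0 x v (Suc k) = rk_expect A (Suc k)
      (\<lambda>s. \<beta> * (Y s k \<bullet> v) + (1 - \<beta>) * ((X s (Suc k) - x) \<bullet> v - (X s k - x) \<bullet> v))"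
    by (simp add: rk_mean_momentum_def X_def Y_def Let_def inner_add_left inner_diff_left)
  also have "\<dots> = \<beta> * rk_expect A (Suc k) (\<lambda>s. Y s k \<bullet> v)
      + (1 - \<beta>) * (rk_expect A (Suc k) (\<lambda>s. (X s (Suc k) - x) \<bullet> v) - rk_expect A (Suc k) (\<lambda>s. (X s k - x) \<bullet> v))"
    unfolding rk_expect_linear rk_expect_diff ..
  also have "rk_expect A (Suc k) (\<lambda>s. Y s k \<bullet> v) = rk_mean_momentum A M \<beta> x0 x v k"
    unfolding rk_mean_momentum_def Y_def
    by (rule rk_expect_Suc_prefix[OF assms]) (metis rk_mom_cong_prefix)
  also have "rk_expect A (Suc k) (\<lambda>s. (X s k - x) \<bullet> v) = rk_mean_error A M \<beta> x0 x v k"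
    unfolding rk_mean_error_def X_def
    by (rule rk_expect_Suc_prefix[OF assms]) (metis rk_mom_cong_prefix)
  finally show ?thesis
    unfolding rk_mean_error_def X_def .
qed

text \<open>Eliminating the momentum: M f_k = e_{k+1} - q e_k by the first recursion.\<close>
lemma rk_mean_error_recurrence:
  fixes A :: "real^'n^'m"
  assumes "\<forall>i. A $ i \<noteq> 0" and "(transpose A ** A) *v v = \<sigma>2 *\<^sub>R v"
  defines "q \<equiv> 1 - \<sigma>2 / frob_sq A"
  shows "rk_mean_error A M \<beta> x0 x v (Suc (Suc k))
       = (q + M * (1 - \<beta>) + \<beta>) * rk_mean_error A M \<beta> x0 x v (Suc k)
         - (q * \<beta> + M * (1 - \<beta>)) * rk_mean_error A M \<beta> x0 x v k"
proof -
  note e_Suc = rk_mean_error_Suc[OF assms(1,2), folded q_def]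
  have "frob_sq A \<noteq> 0" using frob_sq_pos assms(1) by (metis less_irrefl)
  note f_Suc = rk_mean_momentum_Suc[OF this]
  show ?thesis
    unfolding e_Suc[of M \<beta> x0 x "Suc k"] f_Suc
    by (simp add: e_Suc[of M \<beta> x0 x k] algebra_simps)
qed

lemma csqrt_quadratic_root:
  fixes p q :: complex
  defines "z \<equiv> (p + csqrt (p\<^sup>2 - 4 * q)) / 2"
  shows "z\<^sup>2 = p * z - q"
proof -
  have "2 * z - p = csqrt (p\<^sup>2 - 4 * q)" by (simp add: z_def field_simps)
  then have "(2 * z - p)\<^sup>2 = p\<^sup>2 - 4 * q" by simp
  then have "4 * z\<^sup>2 = 4 * (p * z - q)" by (simp add: power2_eq_square algebra_simps)
  then show ?thesis by (simp only: mult_cancel_left) simp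
qed

text \<open>Since z is not real, the real parts of c and c z can be prescribed arbitrarily; the
  real part of c z^k satisfies the recurrence because z is a root of its characteristic polynomial.\<close>
lemma real_recurrence_Re_complex_root:
  fixes u :: "nat \<Rightarrow> real" and z :: complex
  assumes root: "z\<^sup>2 = of_real T * z - of_real D" and "Im z \<noteq> 0"
    and rec: "\<And>k. u (Suc (Suc k)) = T * u (Suc k) - D * u k"
  obtains c where "\<And>k. u k = Re (c * z ^ k)"
proof
  define c where "c = Complex (u 0) ((u 0 * Re z - u 1) / Im z)"
  have "Re (c * z ^ k) = u k \<and> Re (c * z ^ Suc k) = u (Suc k)" for k
  proof (induction k)
    case 0
    then show ?case using \<open>Im z \<noteq> 0\<close> by (simp add: c_def field_simps)
  next
    case (Suc k)
    have "c * z ^ Suc (Suc k) = c * z ^ k * z\<^sup>2" by (simp add: power2_eq_square algebra_simps)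
    also have "\<dots> = of_real T * (c * z ^ Suc k) - of_real D * (c * z ^ k)"
      unfolding root by (simp add: algebra_simps)
    finally have "Re (c * z ^ Suc (Suc k)) = T * Re (c * z ^ Suc k) - D * Re (c * z ^ k)"
      by simp
    with Suc.IH rec[of k] show ?case by simp
  qed
  then show "u k = Re (c * z ^ k)" for k by simp
qed

lemma Re_mult_rcis_power:
  "Re (c * rcis \<rho> \<theta> ^ k) = cmod c * \<rho> ^ k * cos (real k * \<theta> + Arg c)"
proof -
  have "c * rcis \<rho> \<theta> ^ k = rcis (cmod c * \<rho> ^ k) (Arg c + real k * \<theta>)"
    unfolding DeMoivre2 by (subst rcis_cmod_Arg[symmetric]) (simp only: rcis_mult)
  then show ?thesis by (simp add: add.commute)
qed

theorem corollary1p5: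
  fixes A :: "real^'n^'m" and x x0 v :: "real^'n" and \<beta> M :: real
    and l :: nat and sv :: "nat \<Rightarrow> real" and \<rho> \<theta> :: real
  assumes "CARD('n) \<le> CARD('m)"
    and "\<forall>i. A $ i \<noteq> 0"
    and "0 \<le> \<beta>" and "\<beta> < 1" and "0 \<le> M" and "M \<le> 1"
    and "1 \<le> l" and "l \<le> CARD('n)"
    and "singular_value_list A sv"
    and "norm v = 1" and "(transpose A ** A) *v v = (sv (l - 1))\<^sup>2 *\<^sub>R v"
    and "Im ((complex_of_real (1 - (sv (l - 1))\<^sup>2 / frob_sq A + M * (1 - \<beta>)) + complex_of_real \<beta>
              + csqrt (complex_of_real ((1 - (sv (l - 1))\<^sup>2 / frob_sq A + M * (1 - \<beta>) - \<beta>)\<^sup>2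
                                        - 4 * (M * (1 - \<beta>)\<^sup>2)))) / 2) \<noteq> 0"
    and "(complex_of_real (1 - (sv (l - 1))\<^sup>2 / frob_sq A + M * (1 - \<beta>)) + complex_of_real \<beta>
              + csqrt (complex_of_real ((1 - (sv (l - 1))\<^sup>2 / frob_sq A + M * (1 - \<beta>) - \<beta>)\<^sup>2
                                        - 4 * (M * (1 - \<beta>)\<^sup>2)))) / 2 = rcis \<rho> \<theta>"
    and "0 < \<rho>" and "0 < \<theta>" and "\<theta> < pi"
  shows "\<exists>C \<theta>0. \<forall>k::nat.
           rk_expect A (Suc k) (\<lambda>s. (fst (rk_mom A (A *v x) M \<beta> x0 s (Suc k)) - x) \<bullet> v)
             = C * \<rho> ^ k * cos (real k * \<theta> + \<theta>0)"
proof -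
  define q where "q = 1 - (sv (l - 1))\<^sup>2 / frob_sq A"
  define T where "T = q + M * (1 - \<beta>) + \<beta>"
  define D where "D = q * \<beta> + M * (1 - \<beta>)"
  have disc: "(q + M * (1 - \<beta>) - \<beta>)\<^sup>2 - 4 * (M * (1 - \<beta>)\<^sup>2) = T\<^sup>2 - 4 * D"
    unfolding T_def D_def by (simp add: power2_eq_square algebra_simps)
  have "complex_of_real ((q + M * (1 - \<beta>) - \<beta>)\<^sup>2 - 4 * (M * (1 - \<beta>)\<^sup>2))
      = (of_real T)\<^sup>2 - 4 * of_real D"
    unfolding disc by simp
  moreover have "complex_of_real (q + M * (1 - \<beta>)) + of_real \<beta> = of_real T"
    by (simp add: T_def)
  ultimately have \<lambda>: "rcis \<rho> \<theta> = (of_real T + csqrt ((of_real T)\<^sup>2 - 4 * of_real D)) / 2"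
    using assms(13) by (simp only: flip: q_def)
  have "(rcis \<rho> \<theta>)\<^sup>2 = of_real T * rcis \<rho> \<theta> - of_real D"
    unfolding \<lambda> by (rule csqrt_quadratic_root)
  moreover have "Im (rcis \<rho> \<theta>) \<noteq> 0"
    using assms(12) unfolding assms(13) .
  moreover have "rk_mean_error A M \<beta> x0 x v (Suc (Suc (Suc k)))
      = T * rk_mean_error A M \<beta> x0 x v (Suc (Suc k)) - D * rk_mean_error A M \<beta> x0 x v (Suc k)" for k
    unfolding T_def D_def q_def using assms(2,11) by (rule rk_mean_error_recurrence)
  ultimately obtain c where "\<And>k. rk_mean_error A M \<beta> x0 x v (Suc k) = Re (c * rcis \<rho> \<theta> ^ k)"
    by (rule real_recurrence_Re_complex_root[where u = "\<lambda>k. rk_mean_error A M \<beta> x0 x v (Suc k)"]) blast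
  then show ?thesis
    unfolding rk_mean_error_def Re_mult_rcis_power by blast
qed

end
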